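(* Let $G$ be a compact, connected, simply connected simple Lie group with maximal torus $T$, $\mathfrak{h}=\mathrm{Lie}(T)$, simple roots $\Delta=\{a_1,\ldots,a_n\}$, highest root $d$, $\tilde a=-d$, and extended simple roots $\tilde\Delta=\{\tilde a,a_1,\ldots,a_n\}$. Let $g_1,\ldots,g_n$ be the positive integers with $\tilde a^\vee+\sum_{j=1}^n g_j a_j^\vee=0$ (the coroot integers). Let $x=\exp(\tilde x)\in T$ with $\tilde x$ in the closed fundamental alcove $A=\{\xi\in\mathfrak{h}: a_j(\xi)\ge 0\ \forall j,\ d(\xi)\le 1\}$, and suppose that (after renumbering the $a_j$) the set of extended simple roots whose walls contain $\tilde x$ (the simple roots of $Z_G(x)$) is $\Delta_x=\{\tilde a,a_1,\ldots,a_k\}$ with $k<n$. Let $Q^\vee(x)\subseteq Q^\vee$ be the $\mathbb{Z}$-span of the coroots $\tilde a^\vee,a_1^\vee,\ldots,a_k^\vee$ and $\mathfrak{h}(x)\subseteq\mathfrak{h}$ their real linear span. Then, with $N=\gcd(g_{k+1},\ldots,g_n)$, there is an exact sequence $$1\to Q^\vee(x)\to Q^\vee\cap\mathfrak{h}(x)\to\mathbb{Z}/N\mathbb{Z}\to 1.$$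
   Context: $Q^\vee=\sum_j\mathbb{Z}a_j^\vee$ is the coroot lattice, and $\exp:\mathfrak{h}\to T$ is normalized so that its kernel is $Q^\vee$. The wall of $\tilde a$ is $\{\xi: d(\xi)=1\}$ and the wall of $a_j$ is $\{\xi: a_j(\xi)=0\}$. The first map is the inclusion. *)

theory Defs
  imports "HOL-Analysis.Analysis"
begin

text \<open>We identify \<open>\<frak>h\<close> with its dual via the inner product of a euclidean space 'a,
so a root \<open>\<alpha>\<close> is a vector and \<open>\<alpha>(\<xi>) = \<alpha> \<bullet> \<xi>\<close>; the coroot is \<open>2\<alpha>/<\<alpha>,\<alpha>>\<close>.\<close>

definition coroot :: "'a::euclidean_space \<Rightarrow> 'a" where
  "coroot \<alpha> = (2 / (\<alpha> \<bullet> \<alpha>)) *\<^sub>R \<alpha>"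

definition zspan :: "'a::real_vector set \<Rightarrow> 'a set" where
  "zspan S = {(\<Sum>v\<in>F. of_int (c v) *\<^sub>R v) | F c. finite F \<and> F \<subseteq> S}"

definition root_system :: "'a::euclidean_space set \<Rightarrow> bool" where
  "root_system R \<longleftrightarrow> finite R \<and> 0 \<notin> R \<and> span R = UNIV \<and>
     (\<forall>\<alpha>\<in>R. \<forall>\<beta>\<in>R. \<beta> - (2 * (\<beta> \<bullet> \<alpha>) / (\<alpha> \<bullet> \<alpha>)) *\<^sub>R \<alpha> \<in> R) \<and>
     (\<forall>\<alpha>\<in>R. \<forall>\<beta>\<in>R. 2 * (\<beta> \<bullet> \<alpha>) / (\<alpha> \<bullet> \<alpha>) \<in> \<int>) \<and>
     (\<forall>\<alpha>\<in>R. \<forall>c::real. c *\<^sub>R \<alpha> \<in> R \<longrightarrow> c = 1 \<or> c = -1)"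

definition irreducible_root_system :: "'a::euclidean_space set \<Rightarrow> bool" where
  "irreducible_root_system R \<longleftrightarrow> root_system R \<and>
     \<not> (\<exists>R1 R2. R = R1 \<union> R2 \<and> R1 \<noteq> {} \<and> R2 \<noteq> {} \<and>
            (\<forall>\<alpha>\<in>R1. \<forall>\<beta>\<in>R2. \<alpha> \<bullet> \<beta> = 0))"

definition simple_roots :: "'a::euclidean_space set \<Rightarrow> (nat \<Rightarrow> 'a) \<Rightarrow> nat \<Rightarrow> bool" where
  "simple_roots R a n \<longleftrightarrow> inj_on a {1..n} \<and> a ` {1..n} \<subseteq> R \<and>
     independent (a ` {1..n}) \<and> span (a ` {1..n}) = UNIV \<and>
     (\<forall>\<beta>\<in>R. \<exists>c::nat \<Rightarrow> int. \<beta> = (\<Sum>j=1..n. of_int (c j) *\<^sub>R a j) \<and>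
          ((\<forall>j\<in>{1..n}. c j \<ge> 0) \<or> (\<forall>j\<in>{1..n}. c j \<le> 0)))"

definition highest_root :: "'a::euclidean_space set \<Rightarrow> (nat \<Rightarrow> 'a) \<Rightarrow> nat \<Rightarrow> 'a \<Rightarrow> bool" where
  "highest_root R a n d \<longleftrightarrow> d \<in> R \<and>
     (\<forall>\<beta>\<in>R. \<exists>c::nat \<Rightarrow> int. (\<forall>j\<in>{1..n}. c j \<ge> 0) \<and>
          d - \<beta> = (\<Sum>j=1..n. of_int (c j) *\<^sub>R a j))"

end

theory Submission
  imports Defs
begin

(*
  The coroots c_j of the simple roots form a basis of h, and the coroot
  relation says that the extended coroot is e = - (sum_j g_j c_j).  With T = {k+1..n},
  everything can be read off from coordinates in this basis:
    Q       = vectors with integral coordinates;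
    h(x)    = vectors whose T-coordinates are t * g_j for one real t, the level;
    Q(x)    = integral vectors of integral level.
  An integral vector of level t has t * g_j integral for all j in T, hence t * N is
  integral for N = gcd (g_j, j in T) by Bezout, and every level in (1/N) Z occurs.
  Hence u |-> N * level u mod N is a surjective homomorphism from Q meet h(x) onto Z/NZ
  with kernel Q(x), which is the asserted exact sequence.

  The theorem is the instance w = coroot o a, K = {1..k};
  of its hypotheses only the simple-root basis, the coroot relation and k < n are used,
  the others describe the geometric origin of the data.
*)

lemma zspan_finite:
  assumes "finite S"
  shows "zspan S = range (\<lambda>m. \<Sum>v\<in>S. of_int (m v) *\<^sub>R v)"
proof
  show "zspan S \<subseteq> range (\<lambda>m. \<Sum>v\<in>S. of_int (m v) *\<^sub>R v)"
  proof
    fix u assume "u \<in> zspan S"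
    then obtain F c where u: "u = (\<Sum>v\<in>F. of_int (c v) *\<^sub>R v)" "finite F" "F \<subseteq> S"
      unfolding zspan_def by blast
    define m where "m v = (if v \<in> F then c v else 0)" for v
    have "(\<Sum>v\<in>S. of_int (m v) *\<^sub>R v) = (\<Sum>v\<in>F. of_int (m v) *\<^sub>R v)"
      by (rule sum.mono_neutral_right) (use assms u in \<open>auto simp: m_def\<close>)
    also have "\<dots> = u" using u by (simp add: m_def)
    finally have "u = (\<Sum>v\<in>S. of_int (m v) *\<^sub>R v)" by simp
    then show "u \<in> range (\<lambda>m. \<Sum>v\<in>S. of_int (m v) *\<^sub>R v)" by blast
  qed
  show "range (\<lambda>m. \<Sum>v\<in>S. of_int (m v) *\<^sub>R v) \<subseteq> zspan S"
  proof
    fix u assume "u \<in> range (\<lambda>m. \<Sum>v\<in>S. of_int (m v) *\<^sub>R v)"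
    then obtain m where "u = (\<Sum>v\<in>S. of_int (m v) *\<^sub>R v)" by blast
    then show "u \<in> zspan S" unfolding zspan_def using assms by blast
  qed
qed

lemma zspan_family:
  assumes "finite I" and "inj_on w I"
  shows "zspan (w ` I) = range (\<lambda>m. \<Sum>i\<in>I. of_int (m i) *\<^sub>R w i)"
proof -
  have reindex: "(\<Sum>v\<in>w ` I. of_int (m v) *\<^sub>R v) = (\<Sum>i\<in>I. of_int (m (w i)) *\<^sub>R w i)" for m
    using assms(2) by (simp add: sum.reindex)
  have "range (\<lambda>m. \<Sum>i\<in>I. of_int (m (w i)) *\<^sub>R w i) = range (\<lambda>m. \<Sum>i\<in>I. of_int (m i) *\<^sub>R w i)"
  proof (intro equalityI subsetI)
    fix u assume "u \<in> range (\<lambda>m. \<Sum>i\<in>I. of_int (m i) *\<^sub>R w i)"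
    then obtain m where "u = (\<Sum>i\<in>I. of_int (m i) *\<^sub>R w i)" by blast
    also have "\<dots> = (\<Sum>i\<in>I. of_int ((m \<circ> inv_into I w) (w i)) *\<^sub>R w i)"
      using assms(2) by (intro sum.cong) auto
    finally show "u \<in> range (\<lambda>m. \<Sum>i\<in>I. of_int (m (w i)) *\<^sub>R w i)" by blast
  qed auto
  then show ?thesis
    unfolding zspan_finite[OF finite_imageI[OF assms(1)]] reindex by simp
qed

lemma zspan_insert:
  assumes "finite S"
  shows "zspan (insert x S) = {of_int s *\<^sub>R x + v | s v. v \<in> zspan S}"
proof (intro equalityI subsetI)
  fix u assume "u \<in> zspan (insert x S)"
  then obtain m where u: "u = (\<Sum>v\<in>insert x S. of_int (m v) *\<^sub>R v)"
    unfolding zspan_finite[OF finite.insertI[OF assms]] by blast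
  have rest: "(\<Sum>v\<in>S. of_int (m v) *\<^sub>R v) \<in> zspan S"
    unfolding zspan_finite[OF assms] by (rule rangeI)
  show "u \<in> {of_int s *\<^sub>R x + v | s v. v \<in> zspan S}"
  proof (cases "x \<in> S")
    case True
    then have "u = of_int 0 *\<^sub>R x + (\<Sum>v\<in>S. of_int (m v) *\<^sub>R v)" using u by (simp add: insert_absorb)
    then show ?thesis using rest by blast
  next
    case False
    then have "u = of_int (m x) *\<^sub>R x + (\<Sum>v\<in>S. of_int (m v) *\<^sub>R v)" using u assms by simp
    then show ?thesis using rest by blast
  qed
next
  fix u assume "u \<in> {of_int s *\<^sub>R x + v | s v. v \<in> zspan S}"
  then obtain s m where u: "u = of_int s *\<^sub>R x + (\<Sum>v\<in>S. of_int (m v) *\<^sub>R v)"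
    unfolding zspan_finite[OF assms] by blast
  define m' where "m' v = (if v \<in> S then m v else 0) + (if v = x then s else 0)" for v
  have "(\<Sum>v\<in>insert x S. of_int (m' v) *\<^sub>R v)
      = (\<Sum>v\<in>insert x S. of_int (if v \<in> S then m v else 0) *\<^sub>R v)
        + (\<Sum>v\<in>insert x S. of_int (if v = x then s else 0) *\<^sub>R v)"
    unfolding m'_def of_int_add scaleR_add_left sum.distrib ..
  also have "(\<Sum>v\<in>insert x S. of_int (if v \<in> S then m v else 0) *\<^sub>R v)
      = (\<Sum>v\<in>S. of_int (m v) *\<^sub>R v)"
    using assms by (intro sum.mono_neutral_cong_right) auto
  also have "(\<Sum>v\<in>insert x S. of_int (if v = x then s else 0) *\<^sub>R v)
      = (\<Sum>v\<in>insert x S. if v = x then of_int s *\<^sub>R x else 0)"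
    by (intro sum.cong) auto
  also have "\<dots> = of_int s *\<^sub>R x"
    using assms by simp
  finally have "u = (\<Sum>v\<in>insert x S. of_int (m' v) *\<^sub>R v)" by (simp add: u)
  then show "u \<in> zspan (insert x S)"
    unfolding zspan_finite[OF finite.insertI[OF assms]] by blast
qed

lemma Gcd_multiple_in_Ints:
  fixes g :: "'b \<Rightarrow> int"
  assumes "finite A" and "\<forall>j\<in>A. t * of_int (g j) \<in> \<int>"
  shows "t * of_int (Gcd (g ` A)) \<in> (\<int>::real set)"
  using assms
proof (induction A rule: finite_induct)
  case empty then show ?case by simp
next
  case (insert j A)
  obtain u v where uv: "u * g j + v * Gcd (g ` A) = gcd (g j) (Gcd (g ` A))"
    using bezout_int by blast
  have "t * of_int (Gcd (g ` insert j A))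
      = of_int u * (t * of_int (g j)) + of_int v * (t * of_int (Gcd (g ` A)))"
    by (simp add: uv[symmetric] algebra_simps)
  also have "\<dots> \<in> \<int>" using insert by (metis Ints_add Ints_mult Ints_of_int insert_iff)
  finally show ?case .
qed

lemma coroot_coroot:
  assumes "\<alpha> \<noteq> 0"
  shows "coroot (coroot \<alpha>) = \<alpha>"
proof -
  have pos: "\<alpha> \<bullet> \<alpha> > 0" using assms by simp
  have "coroot \<alpha> \<bullet> coroot \<alpha> = 4 / (\<alpha> \<bullet> \<alpha>)"
    using pos by (simp add: coroot_def power2_eq_square field_simps)
  then show ?thesis
    using pos by (simp add: coroot_def field_simps)
qed

lemma inj_on_coroot:
  assumes "0 \<notin> S"
  shows "inj_on coroot S"
proof (rule inj_onI)
  fix \<alpha> \<beta> assume "\<alpha> \<in> S" "\<beta> \<in> S" "coroot \<alpha> = coroot \<beta>"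
  then have "coroot (coroot \<alpha>) = coroot (coroot \<beta>)" "\<alpha> \<noteq> 0" "\<beta> \<noteq> 0" using assms by auto
  then show "\<alpha> = \<beta>" by (simp add: coroot_coroot)
qed

lemma coroot_in_span: "coroot \<alpha> \<in> span {\<alpha>}"
  by (simp add: coroot_def span_base span_scale)

text \<open>The coroots of an independent set are independent: they span the same space and
  have the same number of elements.\<close>

lemma independent_coroot_image:
  fixes S :: "'a::euclidean_space set"
  assumes "independent S"
  shows "independent (coroot ` S)"
proof -
  have fin: "finite S" using assms by (rule finiteI_independent)
  have zero: "0 \<notin> S" using assms by (auto dest: dependent_zero)
  have sub: "coroot ` S \<subseteq> span S"
  proof
    fix \<beta> assume "\<beta> \<in> coroot ` S"
    then obtain \<alpha> where "\<alpha> \<in> S" "\<beta> = coroot \<alpha>" by blast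
    then show "\<beta> \<in> span S"
      using coroot_in_span[of \<alpha>] span_mono[of "{\<alpha>}" S] by auto
  qed
  have sup: "span S \<subseteq> span (coroot ` S)"
  proof (rule span_minimal[OF _ subspace_span])
    show "S \<subseteq> span (coroot ` S)"
    proof
      fix \<alpha> assume "\<alpha> \<in> S"
      then have "\<alpha> \<noteq> 0" using zero by auto
      then have "\<alpha> \<in> span {coroot \<alpha>}"
        using coroot_in_span[of "coroot \<alpha>"] by (simp add: coroot_coroot)
      moreover have "span {coroot \<alpha>} \<subseteq> span (coroot ` S)"
        using \<open>\<alpha> \<in> S\<close> by (intro span_mono) auto
      ultimately show "\<alpha> \<in> span (coroot ` S)" by blast
    qed
  qed
  have "card (coroot ` S) = dim (span S)"
    using card_image[OF inj_on_coroot[OF zero]] dim_eq_card[OF refl assms] by simp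
  then show ?thesis
    using card_eq_dim[OF sub _ finite_imageI[OF fin]] sup by blast
qed

lemma span_family:
  assumes "finite I" and "inj_on w I"
  shows "span (w ` I) = range (\<lambda>x. \<Sum>i\<in>I. x i *\<^sub>R w i)"
proof -
  have reindex: "(\<Sum>v\<in>w ` I. x v *\<^sub>R v) = (\<Sum>i\<in>I. x (w i) *\<^sub>R w i)" for x
    using assms(2) by (simp add: sum.reindex)
  have "range (\<lambda>x. \<Sum>i\<in>I. x (w i) *\<^sub>R w i) = range (\<lambda>x. \<Sum>i\<in>I. x i *\<^sub>R w i)"
  proof (intro equalityI subsetI)
    fix u assume "u \<in> range (\<lambda>x. \<Sum>i\<in>I. x i *\<^sub>R w i)"
    then obtain x where "u = (\<Sum>i\<in>I. x i *\<^sub>R w i)" by blast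
    also have "\<dots> = (\<Sum>i\<in>I. (x \<circ> inv_into I w) (w i) *\<^sub>R w i)"
      using assms(2) by (intro sum.cong) auto
    finally show "u \<in> range (\<lambda>x. \<Sum>i\<in>I. x (w i) *\<^sub>R w i)" by blast
  qed auto
  then show ?thesis
    unfolding span_finite[OF finite_imageI[OF assms(1)]] reindex by simp
qed

locale extended_basis =
  fixes w :: "nat \<Rightarrow> 'a::real_vector" and K T :: "nat set" and g :: "nat \<Rightarrow> int"
  assumes finite_K: "finite K" and finite_T: "finite T" and disjoint: "K \<inter> T = {}"
    and T_nonempty: "T \<noteq> {}" and g_nonzero: "\<forall>j\<in>T. g j \<noteq> 0"
    and w_independent: "independent (w ` (K \<union> T))" and w_inj: "inj_on w (K \<union> T)"
begin

definition ext :: 'a where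
  "ext = - (\<Sum>j\<in>K \<union> T. of_int (g j) *\<^sub>R w j)"

definition comb :: "(nat \<Rightarrow> real) \<Rightarrow> 'a" where
  "comb x = (\<Sum>j\<in>K \<union> T. x j *\<^sub>R w j)"

definition coord :: "'a \<Rightarrow> nat \<Rightarrow> real" where
  "coord u j = representation (w ` (K \<union> T)) u (w j)"

text \<open>The level of a vector whose \<open>T\<close>-coordinates are proportional to \<open>g\<close>: the factor
  of proportionality, which is unique since \<open>g\<close> does not vanish on \<open>T \<noteq> {}\<close>.\<close>

definition level :: "'a \<Rightarrow> real" where
  "level u = (THE t. \<forall>j\<in>T. coord u j = t * of_int (g j))"

lemma finite_KT: "finite (K \<union> T)"
  using finite_K finite_T by simp

lemma inj_K: "inj_on w K"
  using w_inj inj_on_subset by blast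

lemma comb_in_span: "comb x \<in> span (w ` (K \<union> T))"
  unfolding comb_def by (intro span_sum span_scale span_base) auto

lemma coord_comb:
  assumes "j \<in> K \<union> T"
  shows "coord (comb x) j = x j"
proof -
  let ?rep = "representation (w ` (K \<union> T))"
  have "coord (comb x) j = (\<Sum>i\<in>K \<union> T. ?rep (x i *\<^sub>R w i) (w j))"
    unfolding coord_def comb_def using w_independent
    by (subst representation_sum) (auto intro: span_scale span_base)
  also have "\<dots> = (\<Sum>i\<in>K \<union> T. x i * ?rep (w i) (w j))"
    using w_independent by (intro sum.cong refl) (simp add: representation_scale span_base)
  also have "\<dots> = (\<Sum>i\<in>K \<union> T. if i = j then x i else 0)"
    using w_inj assms
    by (intro sum.cong refl) (auto simp: representation_basis[OF w_independent] inj_on_eq_iff)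
  also have "\<dots> = x j"
    using finite_KT assms by simp
  finally show ?thesis .
qed

lemma comb_coord:
  assumes "u \<in> span (w ` (K \<union> T))"
  shows "comb (coord u) = u"
proof -
  have "(\<Sum>v\<in>w ` (K \<union> T). representation (w ` (K \<union> T)) u v *\<^sub>R v) = u"
    using w_independent assms finite_imageI[OF finite_KT] by (rule sum_representation_eq) simp
  then show ?thesis
    by (simp add: comb_def coord_def sum.reindex[OF w_inj])
qed

lemma coord_add:
  assumes "u \<in> span (w ` (K \<union> T))" and "v \<in> span (w ` (K \<union> T))"
  shows "coord (u + v) j = coord u j + coord v j"
  using assms by (simp add: coord_def representation_add[OF w_independent])

lemma zspan_basis:
  "zspan (w ` (K \<union> T)) = {u \<in> span (w ` (K \<union> T)). \<forall>j\<in>K \<union> T. coord u j \<in> \<int>}"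
proof (intro equalityI subsetI)
  fix u assume "u \<in> zspan (w ` (K \<union> T))"
  then obtain m where "u = (\<Sum>j\<in>K \<union> T. of_int (m j) *\<^sub>R w j)"
    unfolding zspan_family[OF finite_KT w_inj] by blast
  then have u: "u = comb (\<lambda>j. of_int (m j))" by (simp add: comb_def)
  then show "u \<in> {u \<in> span (w ` (K \<union> T)). \<forall>j\<in>K \<union> T. coord u j \<in> \<int>}"
    using comb_in_span by (simp add: coord_comb)
next
  fix u assume "u \<in> {u \<in> span (w ` (K \<union> T)). \<forall>j\<in>K \<union> T. coord u j \<in> \<int>}"
  then have u: "u \<in> span (w ` (K \<union> T))" and int: "\<forall>j\<in>K \<union> T. coord u j \<in> \<int>" by auto
  define m where "m j = \<lfloor>coord u j\<rfloor>" for j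
  have "u = comb (coord u)" using comb_coord[OF u] by simp
  also have "\<dots> = (\<Sum>j\<in>K \<union> T. of_int (m j) *\<^sub>R w j)"
    unfolding comb_def m_def using int by (intro sum.cong refl) simp
  finally show "u \<in> zspan (w ` (K \<union> T))"
    unfolding zspan_family[OF finite_KT w_inj] by blast
qed

lemma zspan_subset_span: "zspan (w ` (K \<union> T)) \<subseteq> span (w ` (K \<union> T))"
  using zspan_basis by blast

lemma comb_split:
  "comb (\<lambda>j. (if j \<in> K then y j else 0) + t * of_int (g j))
     = (\<Sum>j\<in>K. y j *\<^sub>R w j) - t *\<^sub>R ext"
proof -
  have "comb (\<lambda>j. (if j \<in> K then y j else 0) + t * of_int (g j))
      = (\<Sum>j\<in>K \<union> T. (if j \<in> K then y j else 0) *\<^sub>R w j)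
        + t *\<^sub>R (\<Sum>j\<in>K \<union> T. of_int (g j) *\<^sub>R w j)"
    by (simp add: comb_def scaleR_add_left sum.distrib scaleR_sum_right)
  also have "(\<Sum>j\<in>K \<union> T. (if j \<in> K then y j else 0) *\<^sub>R w j) = (\<Sum>j\<in>K. y j *\<^sub>R w j)"
    using finite_KT by (intro sum.mono_neutral_cong_right) auto
  finally show ?thesis by (simp add: ext_def)
qed

lemma decompose:
  assumes "u \<in> span (w ` (K \<union> T))" and "\<forall>j\<in>T. coord u j = t * of_int (g j)"
  shows "u = (\<Sum>j\<in>K. (coord u j - t * of_int (g j)) *\<^sub>R w j) - t *\<^sub>R ext"
proof -
  have "u = comb (coord u)" using comb_coord[OF assms(1)] by simp
  also have "\<dots> = comb (\<lambda>j. (if j \<in> K then coord u j - t * of_int (g j) else 0) + t * of_int (g j))"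
    unfolding comb_def using assms(2) disjoint by (intro sum.cong refl) auto
  finally show ?thesis by (simp only: comb_split)
qed

lemma coord_generators:
  assumes "j \<in> K \<union> T"
  shows "coord ((\<Sum>i\<in>K. y i *\<^sub>R w i) - t *\<^sub>R ext) j = (if j \<in> K then y j else 0) + t * of_int (g j)"
  using assms by (simp only: comb_split[symmetric] coord_comb)

lemma generators_in_span: "(\<Sum>i\<in>K. y i *\<^sub>R w i) - t *\<^sub>R ext \<in> span (w ` (K \<union> T))"
  using comb_in_span by (simp only: comb_split[symmetric])

lemma level_unique:
  assumes "\<forall>j\<in>T. coord u j = t * of_int (g j)"
  shows "level u = t"
  unfolding level_def
proof (rule the_equality)
  show "\<forall>j\<in>T. coord u j = t * of_int (g j)" by (fact assms)
next
  fix s assume s: "\<forall>j\<in>T. coord u j = s * of_int (g j)"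
  obtain p where "p \<in> T" using T_nonempty by blast
  then have "s * of_int (g p) = t * of_int (g p)" "g p \<noteq> 0"
    using s assms g_nonzero by auto
  then show "s = t" by simp
qed

lemma span_ext:
  "span (insert ext (w ` K)) = {u \<in> span (w ` (K \<union> T)). \<exists>t. \<forall>j\<in>T. coord u j = t * of_int (g j)}"
proof (intro equalityI subsetI)
  fix u assume "u \<in> span (insert ext (w ` K))"
  then obtain k where "u - k *\<^sub>R ext \<in> span (w ` K)" unfolding span_insert by blast
  then obtain y where "u - k *\<^sub>R ext = (\<Sum>i\<in>K. y i *\<^sub>R w i)"
    unfolding span_family[OF finite_K inj_K] by blast
  then have u: "u = (\<Sum>i\<in>K. y i *\<^sub>R w i) - (- k) *\<^sub>R ext" by (simp add: algebra_simps)
  have "coord u j = - k * of_int (g j)" if "j \<in> T" for j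
  proof -
    have "coord u j = (if j \<in> K then y j else 0) + - k * of_int (g j)"
      by (simp only: u coord_generators[OF UnI2[OF that]])
    then show ?thesis using that disjoint by auto
  qed
  moreover have "u \<in> span (w ` (K \<union> T))"
    unfolding u by (rule generators_in_span)
  ultimately show "u \<in> {u \<in> span (w ` (K \<union> T)). \<exists>t. \<forall>j\<in>T. coord u j = t * of_int (g j)}"
    by blast
next
  fix u assume "u \<in> {u \<in> span (w ` (K \<union> T)). \<exists>t. \<forall>j\<in>T. coord u j = t * of_int (g j)}"
  then obtain t where u: "u \<in> span (w ` (K \<union> T))" "\<forall>j\<in>T. coord u j = t * of_int (g j)" by blast
  have "(\<Sum>j\<in>K. (coord u j - t * of_int (g j)) *\<^sub>R w j) - t *\<^sub>R ext \<in> span (insert ext (w ` K))"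
    by (intro span_diff span_sum span_scale span_base) auto
  then show "u \<in> span (insert ext (w ` K))" using decompose[OF u] by simp
qed

lemma zspan_ext:
  "zspan (insert ext (w ` K))
     = {u \<in> zspan (w ` (K \<union> T)). \<exists>t\<in>\<int>. \<forall>j\<in>T. coord u j = t * of_int (g j)}"
proof (intro equalityI subsetI)
  fix u assume "u \<in> zspan (insert ext (w ` K))"
  then obtain s m where "u = of_int s *\<^sub>R ext + (\<Sum>i\<in>K. of_int (m i) *\<^sub>R w i)"
    unfolding zspan_insert[OF finite_imageI[OF finite_K]] zspan_family[OF finite_K inj_K] by blast
  then have u: "u = (\<Sum>i\<in>K. of_int (m i) *\<^sub>R w i) - (- of_int s) *\<^sub>R ext" by simp
  have coords: "coord u j = (if j \<in> K then of_int (m j) else 0) + (- of_int s) * of_int (g j)"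
    if "j \<in> K \<union> T" for j
    using that by (simp only: u coord_generators)
  have "coord u j \<in> \<int>" if "j \<in> K \<union> T" for j
    using coords[OF that] by (cases "j \<in> K") simp_all
  moreover have "u \<in> span (w ` (K \<union> T))"
    unfolding u by (rule generators_in_span)
  ultimately have "u \<in> zspan (w ` (K \<union> T))"
    unfolding zspan_basis by blast
  moreover have "\<forall>j\<in>T. coord u j = - of_int s * of_int (g j)"
    using coords disjoint by auto
  moreover have "- of_int s \<in> (\<int>::real set)" by simp
  ultimately show "u \<in> {u \<in> zspan (w ` (K \<union> T)). \<exists>t\<in>\<int>. \<forall>j\<in>T. coord u j = t * of_int (g j)}"
    by blast
next
  fix u assume "u \<in> {u \<in> zspan (w ` (K \<union> T)). \<exists>t\<in>\<int>. \<forall>j\<in>T. coord u j = t * of_int (g j)}"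
  then obtain r where u: "u \<in> zspan (w ` (K \<union> T))" "\<forall>j\<in>T. coord u j = of_int r * of_int (g j)"
    by (auto elim: Ints_cases)
  have span: "u \<in> span (w ` (K \<union> T))" and int: "\<forall>j\<in>K. coord u j \<in> \<int>"
    using u(1) unfolding zspan_basis by auto
  define m where "m j = \<lfloor>coord u j\<rfloor> - r * g j" for j
  have "u = (\<Sum>j\<in>K. (coord u j - of_int r * of_int (g j)) *\<^sub>R w j) - of_int r *\<^sub>R ext"
    by (rule decompose[OF span u(2)])
  also have "\<dots> = of_int (- r) *\<^sub>R ext + (\<Sum>j\<in>K. of_int (m j) *\<^sub>R w j)"
    using int by (simp add: m_def algebra_simps)
  finally have u_eq: "u = of_int (- r) *\<^sub>R ext + (\<Sum>j\<in>K. of_int (m j) *\<^sub>R w j)" .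
  have "(\<Sum>j\<in>K. of_int (m j) *\<^sub>R w j) \<in> zspan (w ` K)"
    unfolding zspan_family[OF finite_K inj_K] by (rule rangeI)
  then show "u \<in> zspan (insert ext (w ` K))"
    unfolding zspan_insert[OF finite_imageI[OF finite_K]] using u_eq by blast
qed

definition Q :: "'a set" where
  "Q = zspan (w ` (K \<union> T))"

definition Qx :: "'a set" where
  "Qx = zspan (insert ext (w ` K))"

definition hx :: "'a set" where
  "hx = span (insert ext (w ` K))"

definition N :: int where
  "N = Gcd (g ` T)"

lemma level_coord:
  assumes "u \<in> hx"
  shows "\<forall>j\<in>T. coord u j = level u * of_int (g j)"
proof -
  obtain t where t: "\<forall>j\<in>T. coord u j = t * of_int (g j)"
    using assms unfolding hx_def span_ext by blast
  then show ?thesis using level_unique[OF t] by simp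
qed

lemma hx_subset_span: "hx \<subseteq> span (w ` (K \<union> T))"
  unfolding hx_def span_ext by blast

lemma level_add:
  assumes "u \<in> hx" and "v \<in> hx"
  shows "level (u + v) = level u + level v"
proof (rule level_unique)
  have "u \<in> span (w ` (K \<union> T))" "v \<in> span (w ` (K \<union> T))"
    using assms hx_subset_span by auto
  then show "\<forall>j\<in>T. coord (u + v) j = (level u + level v) * of_int (g j)"
    using level_coord[OF assms(1)] level_coord[OF assms(2)]
    by (simp add: coord_add distrib_right)
qed

lemma N_pos: "N > 0"
proof -
  obtain p where "p \<in> T" using T_nonempty by blast
  then have "N \<noteq> 0" using g_nonzero by (auto simp: N_def)
  then show ?thesis by (simp add: N_def order_less_le)
qed

lemma N_dvd: "j \<in> T \<Longrightarrow> N dvd g j"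
  by (simp add: N_def)

text \<open>The level of a lattice vector in \<open>hx\<close> lies in \<open>1/N \<int>\<close>: this is where the gcd
  enters.\<close>

lemma level_times_N_in_Ints:
  assumes "u \<in> Q \<inter> hx"
  shows "level u * of_int N \<in> \<int>"
  unfolding N_def
proof (rule Gcd_multiple_in_Ints[OF finite_T], rule ballI)
  fix j assume "j \<in> T"
  have "coord u j = level u * of_int (g j)"
    using assms level_coord[of u] \<open>j \<in> T\<close> by auto
  moreover have "coord u j \<in> \<int>"
    using assms \<open>j \<in> T\<close> unfolding Q_def zspan_basis by auto
  ultimately show "level u * of_int (g j) \<in> \<int>" by simp
qed

lemma Qx_eq: "Qx = {u \<in> Q \<inter> hx. level u \<in> \<int>}"
proof (intro equalityI subsetI)
  fix u assume "u \<in> Qx"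
  then obtain t where u: "u \<in> Q" "t \<in> \<int>" "\<forall>j\<in>T. coord u j = t * of_int (g j)"
    unfolding Qx_def Q_def zspan_ext by blast
  have "u \<in> hx"
    using u zspan_subset_span unfolding hx_def span_ext Q_def by blast
  then show "u \<in> {u \<in> Q \<inter> hx. level u \<in> \<int>}"
    using u level_unique[OF u(3)] by simp
next
  fix u assume "u \<in> {u \<in> Q \<inter> hx. level u \<in> \<int>}"
  then show "u \<in> Qx"
    using level_coord[of u] unfolding Qx_def Q_def zspan_ext by blast
qed

lemma level_attained: "\<exists>u\<in>Q \<inter> hx. level u = of_int i / of_int N"
proof -
  define x where "x j = (if j \<in> T then of_int (i * (g j div N)) else 0 :: real)" for j
  have T_coord: "x j = of_int i / of_int N * of_int (g j)" if j: "j \<in> T" for j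
  proof -
    obtain q where "g j = N * q" using N_dvd[OF j] by blast
    then show ?thesis using j N_pos by (simp add: x_def)
  qed
  have "comb x \<in> Q"
    unfolding Q_def zspan_basis using comb_in_span by (simp add: coord_comb x_def)
  moreover have T_coord': "\<forall>j\<in>T. coord (comb x) j = of_int i / of_int N * of_int (g j)"
    using T_coord by (simp add: coord_comb)
  then have "comb x \<in> hx"
    unfolding hx_def span_ext using comb_in_span by blast
  ultimately show ?thesis
    using level_unique[OF T_coord'] by blast
qed

text \<open>The map onto \<open>\<int>/N\<int>\<close> (represented by \<open>{0..<N}\<close>): \<open>N\<close> times the level, modulo
  \<open>N\<close>.  It is additive and surjective.\<close>

definition quotient_map :: "'a \<Rightarrow> int" where
  "quotient_map u = \<lfloor>level u * of_int N\<rfloor> mod N"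

lemma quotient_map_eq:
  assumes "level u * of_int N = of_int z"
  shows "quotient_map u = z mod N"
  using assms by (simp add: quotient_map_def)

lemma quotient_map_add:
  assumes u: "u \<in> Q \<inter> hx" and v: "v \<in> Q \<inter> hx"
  shows "quotient_map (u + v) = (quotient_map u + quotient_map v) mod N"
proof -
  obtain a b where a: "level u * of_int N = of_int a" and b: "level v * of_int N = of_int b"
    using level_times_N_in_Ints[OF u] level_times_N_in_Ints[OF v] by (auto elim!: Ints_cases)
  have "level (u + v) * of_int N = of_int (a + b)"
    using u v a b by (simp add: level_add distrib_right)
  then show ?thesis
    using quotient_map_eq[OF a] quotient_map_eq[OF b] by (simp add: quotient_map_eq mod_add_eq)
qed

lemma quotient_map_surj: "quotient_map ` (Q \<inter> hx) = {0..<N}"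
proof (intro equalityI subsetI)
  fix i assume i: "i \<in> {0..<N}"
  obtain u where u: "u \<in> Q \<inter> hx" "level u = of_int i / of_int N"
    using level_attained by blast
  then have "quotient_map u = i mod N"
    using N_pos by (intro quotient_map_eq) simp
  then show "i \<in> quotient_map ` (Q \<inter> hx)" using u i by force
qed (use N_pos in \<open>auto simp: quotient_map_def\<close>)

lemma quotient_map_eq_0_iff:
  assumes u: "u \<in> Q \<inter> hx"
  shows "quotient_map u = 0 \<longleftrightarrow> level u \<in> \<int>"
proof -
  obtain z where z: "level u * of_int N = of_int z"
    using level_times_N_in_Ints[OF u] by (auto elim!: Ints_cases)
  have "level u = of_int z / of_int N" using z N_pos by (simp add: field_simps)
  then have "level u \<in> \<int> \<longleftrightarrow> N dvd z"
    using N_pos by (simp add: of_int_div_of_int_in_Ints_iff)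
  then show ?thesis using quotient_map_eq[OF z] by (simp add: dvd_eq_mod_eq_0)
qed

theorem exact_sequence:
  "Qx \<subseteq> Q \<inter> hx \<and>
   (\<exists>f :: 'a \<Rightarrow> int. f \<in> (Q \<inter> hx) \<rightarrow> {0..<N} \<and>
      (\<forall>u\<in>Q \<inter> hx. \<forall>v\<in>Q \<inter> hx. f (u + v) = (f u + f v) mod N) \<and>
      f ` (Q \<inter> hx) = {0..<N} \<and>
      {u \<in> Q \<inter> hx. f u = 0} = Qx)"
proof (intro conjI exI[of _ quotient_map] ballI)
  show "Qx \<subseteq> Q \<inter> hx" unfolding Qx_eq by blast
  show "quotient_map \<in> Q \<inter> hx \<rightarrow> {0..<N}"
    using quotient_map_surj by blast
  show "quotient_map (u + v) = (quotient_map u + quotient_map v) mod N"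
    if "u \<in> Q \<inter> hx" and "v \<in> Q \<inter> hx" for u v
    using that by (rule quotient_map_add)
  show "quotient_map ` (Q \<inter> hx) = {0..<N}" by (fact quotient_map_surj)
  show "{u \<in> Q \<inter> hx. quotient_map u = 0} = Qx"
    unfolding Qx_eq using quotient_map_eq_0_iff by blast
qed

end

theorem mainTheorem3:
  fixes R :: "'a::euclidean_space set" and a :: "nat \<Rightarrow> 'a" and n k :: nat
    and d \<xi> :: 'a and g :: "nat \<Rightarrow> int"
  assumes irr: "irreducible_root_system R"
    and base: "simple_roots R a n"
    and hr: "highest_root R a n d"
    and g_pos: "\<forall>j\<in>{1..n}. g j > 0"
    and g_rel: "coroot (- d) + (\<Sum>j=1..n. of_int (g j) *\<^sub>R coroot (a j)) = 0"
    and alcove: "(\<forall>j\<in>{1..n}. a j \<bullet> \<xi> \<ge> 0) \<and> d \<bullet> \<xi> \<le> 1"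
    and kn: "k < n"
    and walls: "d \<bullet> \<xi> = 1 \<and> (\<forall>j\<in>{1..n}. a j \<bullet> \<xi> = 0 \<longleftrightarrow> j \<le> k)"
  shows "let Q = zspan (coroot ` a ` {1..n});
             Qx = zspan (coroot ` ({- d} \<union> a ` {1..k}));
             hx = span (coroot ` ({- d} \<union> a ` {1..k}));
             N = Gcd (g ` {k+1..n})
         in Qx \<subseteq> Q \<inter> hx \<and>
            (\<exists>f :: 'a \<Rightarrow> int. f \<in> (Q \<inter> hx) \<rightarrow> {0..<N} \<and>
               (\<forall>u\<in>Q \<inter> hx. \<forall>v\<in>Q \<inter> hx. f (u + v) = (f u + f v) mod N) \<and>
               f ` (Q \<inter> hx) = {0..<N} \<and>
               {u \<in> Q \<inter> hx. f u = 0} = Qx)"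
proof -
  have KT: "{1..k} \<union> {k+1..n} = {1..n}" using kn by auto
  have a_indep: "independent (a ` {1..n})" and a_inj: "inj_on a {1..n}"
    using base by (auto simp: simple_roots_def)
  then have "0 \<notin> a ` {1..n}" using dependent_zero by blast
  then have "inj_on (coroot \<circ> a) {1..n}"
    using a_inj by (intro comp_inj_on inj_on_coroot)
  moreover have coroots: "(coroot \<circ> a) ` {1..n} = coroot ` a ` {1..n}" by (simp add: image_comp)
  ultimately have basis: "independent ((coroot \<circ> a) ` ({1..k} \<union> {k+1..n}))"
    "inj_on (coroot \<circ> a) ({1..k} \<union> {k+1..n})"
    using independent_coroot_image[OF a_indep] unfolding KT by simp_all
  have "\<forall>j\<in>{k+1..n}. g j \<noteq> 0"
  proof
    fix j assume "j \<in> {k+1..n}"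
    then have "j \<in> {1..n}" using KT by blast
    then show "g j \<noteq> 0" using g_pos by (simp add: order_less_imp_not_eq2)
  qed
  with kn basis interpret extended_basis "coroot \<circ> a" "{1..k}" "{k+1..n}" g
    by unfold_locales simp_all
  have "ext = coroot (- d)"
    unfolding ext_def KT using g_rel by (simp add: add_eq_0_iff)
  then have extended: "coroot ` ({- d} \<union> a ` {1..k}) = insert ext ((coroot \<circ> a) ` {1..k})"
    by (auto simp: image_comp)
  from exact_sequence show ?thesis
    unfolding Let_def Q_def Qx_def hx_def N_def KT coroots extended .
qed

end
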